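(* Let $\varepsilon>0$, $\kappa\ge 0$, $\alpha\ge0$, $p,q\in[1,\infty]$, and let training points $(\boldsymbol x^i,y^i)\in\mathbb{R}^n\times\{-1,+1\}$, $i\in[N]$, be given. Then the optimal value of $$\inf_{\boldsymbol\beta\in\mathbb{R}^n}\ \sup_{\mathbb{Q}\in\mathfrak B_\varepsilon(\mathbb{P}_N)}\ \mathbb{E}_{\mathbb{Q}}\Big[\sup_{\boldsymbol z:\|\boldsymbol z\|_p\le\alpha}\ell_{\boldsymbol\beta}(\boldsymbol x+\boldsymbol z,y)\Big]\qquad\text{(DR-ARO)}$$ equals the optimal value of the convex program $$\inf_{\boldsymbol\beta,\lambda,\boldsymbol s}\ \varepsilon\lambda+\frac1N\sum_{i=1}^N s_i\quad\text{s.t.}\quad \ell^\alpha_{\boldsymbol\beta}(\boldsymbol x^i,y^i)\le s_i,\ \ \ell^\alpha_{\boldsymbol\beta}(\boldsymbol x^i,-y^i)-\lambda\kappa\le s_i\ \ \forall i\in[N],\quad \|\boldsymbol\beta\|_{q^\star}\le\lambda,\quad \boldsymbol\beta\in\mathbb{R}^n,\ \lambda\ge0,\ \boldsymbol s\in\mathbb{R}^N_+,$$ and for each fixed $\boldsymbol\beta$ the inner worst-case expectation of DR-ARO equals the infimum of this program over $(\lambda,\boldsymbol s)$ with $\boldsymbol\beta$ fixed.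
   Context: $p^\star,q^\star$ denote dual exponents: $1/p+1/p^\star=1$, $1/q+1/q^\star=1$. Logloss $\ell_{\boldsymbol\beta}(\boldsymbol x,y)=\log(1+\exp(-y\boldsymbol\beta^\top\boldsymbol x))$; adversarial loss $\ell^\alpha_{\boldsymbol\beta}(\boldsymbol x,y)=\log(1+\exp(-y\boldsymbol\beta^\top\boldsymbol x+\alpha\|\boldsymbol\beta\|_{p^\star}))$. $\Xi=\mathbb{R}^n\times\{-1,+1\}$ with metric $d((\boldsymbol x,y),(\boldsymbol x',y'))=\|\boldsymbol x-\boldsymbol x'\|_q+\kappa\mathbb 1[y\ne y']$; $\mathrm W$ is the type-1 Wasserstein distance on Borel probability measures on $\Xi$ (finite first moment) induced by $d$, i.e. $\mathrm W(\mathbb{Q},\mathbb{Q}')=\inf_{\Pi\in\mathcal C(\mathbb{Q},\mathbb{Q}')}\int d\,d\Pi$ over couplings; $\mathfrak B_\varepsilon(\mathbb{P})=\{\mathbb{Q}:\mathrm W(\mathbb{Q},\mathbb{P})\le\varepsilon\}$; $\mathbb{P}_N=\frac1N\sum_i\delta_{(\boldsymbol x^i,y^i)}$. *)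

theory Defs
  imports "HOL-Analysis.Analysis" "HOL-Probability.Probability"
begin

text \<open>Labels y in {-1,+1} are represented by bool: True = +1, False = -1.\<close>
definition lab :: "bool \<Rightarrow> real" where
  "lab y = (if y then 1 else -1)"

definition pnorm :: "ereal \<Rightarrow> real ^ 'n::finite \<Rightarrow> real" where
  "pnorm p x = (if p = \<infinity> then Max (range (\<lambda>i. \<bar>x $ i\<bar>))
                else (\<Sum>i\<in>UNIV. \<bar>x $ i\<bar> powr real_of_ereal p) powr (1 / real_of_ereal p))"

definition dual_exp :: "ereal \<Rightarrow> ereal" where
  "dual_exp p = (if p = 1 then \<infinity> else if p = \<infinity> then 1
                 else ereal (real_of_ereal p / (real_of_ereal p - 1)))"

definition logloss :: "real ^ 'n::finite \<Rightarrow> real ^ 'n \<Rightarrow> bool \<Rightarrow> real" where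
  "logloss \<beta> x y = ln (1 + exp (- lab y * (\<beta> \<bullet> x)))"

definition advloss :: "ereal \<Rightarrow> real \<Rightarrow> real ^ 'n::finite \<Rightarrow> real ^ 'n \<Rightarrow> bool \<Rightarrow> real" where
  "advloss p \<alpha> \<beta> x y = ln (1 + exp (- lab y * (\<beta> \<bullet> x) + \<alpha> * pnorm (dual_exp p) \<beta>))"

definition xi_dist :: "ereal \<Rightarrow> real \<Rightarrow> ((real ^ 'n::finite) \<times> bool) \<Rightarrow> ((real ^ 'n) \<times> bool) \<Rightarrow> real" where
  "xi_dist q \<kappa> \<xi> \<xi>' = pnorm q (fst \<xi> - fst \<xi>') + \<kappa> * (if snd \<xi> \<noteq> snd \<xi>' then 1 else 0)"

definition prob_Xi :: "ereal \<Rightarrow> real \<Rightarrow> ((real ^ 'n::finite) \<times> bool) measure set" where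
  "prob_Xi q \<kappa> = {Q. sets Q = sets borel \<and> prob_space Q \<and>
      (\<integral>\<^sup>+ \<xi>. ennreal (xi_dist q \<kappa> \<xi> (0, True)) \<partial>Q) < \<infinity>}"

definition couplings ::
  "('a::topological_space) measure \<Rightarrow> 'a measure \<Rightarrow> ('a \<times> 'a) measure set" where
  "couplings Q Q' = {C. sets C = sets borel \<and> prob_space C \<and>
      distr C borel fst = Q \<and> distr C borel snd = Q'}"

definition wass :: "ereal \<Rightarrow> real \<Rightarrow> ((real ^ 'n::finite) \<times> bool) measure \<Rightarrow> ((real ^ 'n) \<times> bool) measure \<Rightarrow> ennreal" where
  "wass q \<kappa> Q Q' = (INF C\<in>couplings Q Q'. \<integral>\<^sup>+ z. ennreal (xi_dist q \<kappa> (fst z) (snd z)) \<partial>C)"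

definition empirical :: "nat \<Rightarrow> (nat \<Rightarrow> real ^ 'n::finite) \<Rightarrow> (nat \<Rightarrow> bool) \<Rightarrow> ((real ^ 'n) \<times> bool) measure" where
  "empirical N X Y = measure_of UNIV (sets borel)
      (\<lambda>A. ennreal (real (card {i. i < N \<and> (X i, Y i) \<in> A}) / real N))"

definition wball :: "ereal \<Rightarrow> real \<Rightarrow> real \<Rightarrow> ((real ^ 'n::finite) \<times> bool) measure \<Rightarrow> ((real ^ 'n) \<times> bool) measure set" where
  "wball q \<kappa> \<epsilon> P = {Q \<in> prob_Xi q \<kappa>. wass q \<kappa> Q P \<le> ennreal \<epsilon>}"

definition worst_loss :: "ereal \<Rightarrow> real \<Rightarrow> real ^ 'n::finite \<Rightarrow> ((real ^ 'n) \<times> bool) \<Rightarrow> ennreal" where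
  "worst_loss p \<alpha> \<beta> \<xi> = (SUP z\<in>{z. pnorm p z \<le> \<alpha>}. ennreal (logloss \<beta> (fst \<xi> + z) (snd \<xi>)))"

definition dr_aro_inner :: "real \<Rightarrow> real \<Rightarrow> real \<Rightarrow> ereal \<Rightarrow> ereal \<Rightarrow> nat \<Rightarrow>
    (nat \<Rightarrow> real ^ 'n::finite) \<Rightarrow> (nat \<Rightarrow> bool) \<Rightarrow> real ^ 'n \<Rightarrow> ennreal" where
  "dr_aro_inner \<epsilon> \<kappa> \<alpha> p q N X Y \<beta> =
     (SUP Q\<in>wball q \<kappa> \<epsilon> (empirical N X Y). \<integral>\<^sup>+ \<xi>. worst_loss p \<alpha> \<beta> \<xi> \<partial>Q)"

definition prog_feasible :: "real \<Rightarrow> real \<Rightarrow> ereal \<Rightarrow> ereal \<Rightarrow> nat \<Rightarrow>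
    (nat \<Rightarrow> real ^ 'n::finite) \<Rightarrow> (nat \<Rightarrow> bool) \<Rightarrow> real ^ 'n \<Rightarrow> real \<Rightarrow> (nat \<Rightarrow> real) \<Rightarrow> bool" where
  "prog_feasible \<kappa> \<alpha> p q N X Y \<beta> lam s \<longleftrightarrow>
     (\<forall>i<N. advloss p \<alpha> \<beta> (X i) (Y i) \<le> s i \<and>
            advloss p \<alpha> \<beta> (X i) (\<not> Y i) - lam * \<kappa> \<le> s i \<and> 0 \<le> s i) \<and>
     pnorm (dual_exp q) \<beta> \<le> lam \<and> 0 \<le> lam"

definition prog_obj :: "real \<Rightarrow> nat \<Rightarrow> real \<Rightarrow> (nat \<Rightarrow> real) \<Rightarrow> real" where
  "prog_obj \<epsilon> N lam s = \<epsilon> * lam + (1 / real N) * (\<Sum>i<N. s i)"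

end

theory Submission
  imports Defs
begin

text \<open>
  For fixed \<open>\<beta>\<close> the inner adversary maximizes \<open>\<ell>\<^sub>\<beta>\<close> over an \<open>\<ell>\<^sub>p\<close>-ball, which by Hoelder duality
  turns the loss into \<open>\<ell>\<^sup>\<alpha>\<^sub>\<beta>\<close>. Since \<open>\<ell>\<^sup>\<alpha>\<^sub>\<beta>\<close> is \<open>\<parallel>\<beta>\<parallel>\<^sub>q\<^sub>*\<close>-Lipschitz in the features, every feasible
  \<open>(\<lambda>, s)\<close> bounds the expected loss under any coupling with \<open>\<bbbP>\<^sub>N\<close>, giving weak duality. For the converse
  the one-dimensional program in \<open>\<lambda>\<close> is solved explicitly by a threshold: samples whose flipped-label
  loss exceeds the original one by more than \<open>\<lambda>\<kappa>\<close> get their label flipped, ties fractionally. The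
  distribution that flips labels accordingly and sends a vanishing mass far along the direction dual
  to \<open>\<beta>\<close> with the leftover budget then attains the program value up to any \<open>\<delta> > 0\<close>.
\<close>

section \<open>Hoelder duality for the \<open>\<ell>\<^sub>p\<close> norms\<close>

lemma ereal_ge_1_cases:
  assumes "1 \<le> (r::ereal)"
  obtains "r = 1" | "r = \<infinity>" | R where "r = ereal R" "1 < R"
proof (cases r)
  case (real R)
  then show ?thesis using assms that by (cases "R = 1") (auto simp: one_ereal_def)
qed (use assms that in auto)

lemma pnorm_1: "pnorm 1 (x::real^'n::finite) = (\<Sum>i\<in>UNIV. \<bar>x $ i\<bar>)"
  unfolding pnorm_def by (simp add: sum_nonneg)

lemma pnorm_infinity: "pnorm \<infinity> (x::real^'n::finite) = Max (range (\<lambda>i. \<bar>x $ i\<bar>))"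
  unfolding pnorm_def by simp

lemma pnorm_ereal: "pnorm (ereal r) (x::real^'n::finite) = (\<Sum>i\<in>UNIV. \<bar>x $ i\<bar> powr r) powr (1 / r)"
  unfolding pnorm_def by simp

lemma dual_exp_ereal: "1 < r \<Longrightarrow> dual_exp (ereal r) = ereal (r / (r - 1))"
  by (auto simp: dual_exp_def one_ereal_def)

lemma abs_le_Max_abs: "\<bar>(x::real^'n::finite) $ i\<bar> \<le> Max (range (\<lambda>i. \<bar>x $ i\<bar>))"
  by (rule Max_ge) auto

lemma pnorm_nonneg: "0 \<le> pnorm p (x::real^'n::finite)"
  using order_trans[OF abs_ge_zero abs_le_Max_abs[of x]] unfolding pnorm_def by simp

lemma inner_vec_eq_sum: "(a::real^'n::finite) \<bullet> b = (\<Sum>i\<in>UNIV. a $ i * b $ i)"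
  by (simp add: inner_vec_def)

lemma mult_sgn_self: "(a::real) * sgn a = \<bar>a\<bar>"
  by (cases "a > 0"; cases "a = 0") auto

lemma Hoelder_inequality_sum:
  fixes a b :: "'i \<Rightarrow> real"
  assumes "finite I" and P: "1 < P" and Q: "1 < Q" and PQ: "1 / P + 1 / Q = 1"
  shows "\<bar>\<Sum>i\<in>I. a i * b i\<bar> \<le> (\<Sum>i\<in>I. \<bar>a i\<bar> powr P) powr (1 / P) * (\<Sum>i\<in>I. \<bar>b i\<bar> powr Q) powr (1 / Q)"
proof -
  define SA where "SA = (\<Sum>i\<in>I. \<bar>a i\<bar> powr P)"
  define SB where "SB = (\<Sum>i\<in>I. \<bar>b i\<bar> powr Q)"
  define A where "A = SA powr (1 / P)"
  define B where "B = SB powr (1 / Q)"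
  have SA0: "0 \<le> SA" "0 \<le> SB" unfolding SA_def SB_def by (auto intro: sum_nonneg)
  have abs_sum: "\<bar>\<Sum>i\<in>I. a i * b i\<bar> \<le> (\<Sum>i\<in>I. \<bar>a i\<bar> * \<bar>b i\<bar>)"
    using sum_abs[of "\<lambda>i. a i * b i" I] by (simp add: abs_mult)
  show ?thesis
  proof (cases "SA = 0 \<or> SB = 0")
    case True
    then have "(\<forall>i\<in>I. a i = 0) \<or> (\<forall>i\<in>I. b i = 0)"
      unfolding SA_def SB_def using \<open>finite I\<close> by (auto simp: sum_nonneg_eq_0_iff)
    then show ?thesis by (auto simp: SA0)
  next
    case False
    then have AB: "0 < A" "0 < B" using SA0 unfolding A_def B_def by auto
    have AP: "A powr P = SA" unfolding A_def using SA0 P by (simp add: powr_powr)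
    have BQ: "B powr Q = SB" unfolding B_def using SA0 Q by (simp add: powr_powr)
    have "(\<Sum>i\<in>I. (\<bar>a i\<bar> / A) * (\<bar>b i\<bar> / B)) \<le> (\<Sum>i\<in>I. (\<bar>a i\<bar> / A) powr P / P + (\<bar>b i\<bar> / B) powr Q / Q)"
      by (intro sum_mono Youngs_inequality[OF P Q PQ]) (use AB in auto)
    also have "\<dots> = SA / A powr P / P + SB / B powr Q / Q"
      using AB by (simp add: SA_def SB_def powr_divide sum.distrib sum_divide_distrib)
    also have "\<dots> = 1" using AP BQ False PQ by simp
    finally have "(\<Sum>i\<in>I. \<bar>a i\<bar> * \<bar>b i\<bar>) \<le> A * B"
      using AB by (simp add: sum_divide_distrib[symmetric] divide_le_eq)
    with abs_sum show ?thesis unfolding A_def B_def SA_def SB_def by linarith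
  qed
qed

lemma Hoelder_inequality_sum_attained:
  fixes b :: "'i \<Rightarrow> real"
  assumes "finite I" and P: "1 < P" and Q: "Q = P / (P - 1)"
  obtains u where "(\<Sum>i\<in>I. \<bar>u i\<bar> powr P) powr (1 / P) \<le> 1"
    and "(\<Sum>i\<in>I. b i * u i) = (\<Sum>i\<in>I. \<bar>b i\<bar> powr Q) powr (1 / Q)"
proof -
  have Q1: "1 < Q" using P by (simp add: Q)
  have QP: "(Q - 1) * P = Q" using P by (simp add: Q field_simps)
  define S where "S = (\<Sum>i\<in>I. \<bar>b i\<bar> powr Q)"
  define B where "B = S powr (1 / Q)"
  have S0: "0 \<le> S" unfolding S_def by (auto intro: sum_nonneg)
  show ?thesis
  proof (cases "S = 0")
    case True
    then show ?thesis using that[of "\<lambda>_. 0"] P by (simp add: S_def)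
  next
    case False
    then have "0 < B" using S0 by (simp add: B_def)
    have BQ: "B powr Q = S" unfolding B_def using S0 Q1 by (simp add: powr_powr)
    \<comment> \<open>the extremal vector of Hoelder's inequality: \<open>u\<^sub>i \<propto> sgn b\<^sub>i \<bar>b\<^sub>i\<bar>\<^sup>Q\<^sup>-\<^sup>1\<close>\<close>
    define u where "u i = sgn (b i) * \<bar>b i\<bar> powr (Q - 1) / B powr (Q - 1)" for i
    have bu: "b i * u i = \<bar>b i\<bar> powr Q / B powr (Q - 1)" for i
    proof (cases "b i = 0")
      case False
      have "\<bar>b i\<bar> * \<bar>b i\<bar> powr (Q - 1) = \<bar>b i\<bar> powr Q"
        using powr_add[of "\<bar>b i\<bar>" 1 "Q - 1"] False by simp
      then show ?thesis unfolding u_def by (simp add: mult.assoc[symmetric] mult_sgn_self)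
    qed (simp add: u_def)
    have "(\<Sum>i\<in>I. b i * u i) = B powr Q / B powr (Q - 1)"
      unfolding bu BQ S_def by (simp add: sum_divide_distrib)
    also have "\<dots> = B" using \<open>0 < B\<close> by (simp add: powr_diff[symmetric])
    finally have "(\<Sum>i\<in>I. b i * u i) = S powr (1 / Q)" by (simp add: B_def)
    moreover have "\<bar>u i\<bar> powr P = \<bar>b i\<bar> powr Q / S" for i
    proof -
      have "\<bar>u i\<bar> = \<bar>b i\<bar> powr (Q - 1) / B powr (Q - 1)"
        unfolding u_def by (cases "b i = 0") (auto simp: abs_mult abs_sgn_eq)
      then have "\<bar>u i\<bar> powr P = \<bar>b i\<bar> powr Q / B powr Q"
        by (simp add: powr_divide powr_powr QP)
      then show ?thesis using BQ by simp
    qed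
    then have "(\<Sum>i\<in>I. \<bar>u i\<bar> powr P) = 1"
      using False by (simp add: sum_divide_distrib[symmetric] S_def)
    ultimately show ?thesis using that[of u] by (simp add: S_def)
  qed
qed

lemma abs_inner_le_pnorm_dual:
  assumes "1 \<le> r"
  shows "\<bar>(\<beta>::real^'n::finite) \<bullet> x\<bar> \<le> pnorm (dual_exp r) \<beta> * pnorm r x"
  using assms
proof (cases rule: ereal_ge_1_cases)
  have abs_inner: "\<bar>\<beta> \<bullet> x\<bar> \<le> (\<Sum>i\<in>UNIV. \<bar>\<beta> $ i\<bar> * \<bar>x $ i\<bar>)"
    unfolding inner_vec_eq_sum using sum_abs[of "\<lambda>i. \<beta> $ i * x $ i" UNIV] by (simp add: abs_mult)
  {
    case 1
    have "(\<Sum>i\<in>UNIV. \<bar>\<beta> $ i\<bar> * \<bar>x $ i\<bar>) \<le> (\<Sum>i\<in>UNIV. Max (range (\<lambda>i. \<bar>\<beta> $ i\<bar>)) * \<bar>x $ i\<bar>)"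
      by (intro sum_mono mult_right_mono abs_le_Max_abs) auto
    with abs_inner 1 show ?thesis by (simp add: dual_exp_def pnorm_infinity pnorm_1 sum_distrib_left)
  next
    case 2
    have "(\<Sum>i\<in>UNIV. \<bar>\<beta> $ i\<bar> * \<bar>x $ i\<bar>) \<le> (\<Sum>i\<in>UNIV. \<bar>\<beta> $ i\<bar> * Max (range (\<lambda>i. \<bar>x $ i\<bar>)))"
      by (intro sum_mono mult_left_mono abs_le_Max_abs) auto
    with abs_inner 2 show ?thesis by (simp add: dual_exp_def pnorm_infinity pnorm_1 sum_distrib_right)
  }
next
  case (3 R)
  have "1 / (R / (R - 1)) + 1 / R = 1" "1 < R / (R - 1)" using 3 by (auto simp: field_simps)
  from Hoelder_inequality_sum[OF _ this(2) 3(2) this(1), of UNIV "\<lambda>i. \<beta> $ i" "\<lambda>i. x $ i"]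
  show ?thesis using 3 by (simp add: dual_exp_ereal pnorm_ereal inner_vec_eq_sum)
qed

lemma pnorm_dual_attained:
  assumes "1 \<le> r"
  obtains u :: "real^'n::finite" where "pnorm r u \<le> 1" "\<beta> \<bullet> u = pnorm (dual_exp r) \<beta>"
  using assms
proof (cases rule: ereal_ge_1_cases)
  case 1
  have "Max (range (\<lambda>i. \<bar>\<beta> $ i\<bar>)) \<in> range (\<lambda>i. \<bar>\<beta> $ i\<bar>)"
    by (rule Max_in) auto
  then obtain k where k: "\<bar>\<beta> $ k\<bar> = Max (range (\<lambda>i. \<bar>\<beta> $ i\<bar>))"
    by (metis imageE)
  define u :: "real^'n" where "u = (\<chi> i. if i = k then sgn (\<beta> $ k) else 0)"
  have "pnorm r u = \<bar>sgn (\<beta> $ k)\<bar>"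
    unfolding 1 pnorm_1 u_def by (simp add: if_distrib cong: if_cong)
  moreover have "\<beta> \<bullet> u = \<bar>\<beta> $ k\<bar>"
    unfolding inner_vec_eq_sum u_def by (simp add: if_distrib mult_sgn_self cong: if_cong)
  ultimately show ?thesis using 1 k that[of u] by (simp add: dual_exp_def pnorm_infinity abs_sgn_eq)
next
  case 2
  define u :: "real^'n" where "u = (\<chi> i. sgn (\<beta> $ i))"
  have "pnorm r u \<le> 1"
    unfolding 2 pnorm_infinity u_def by (subst Max_le_iff) (auto simp: abs_sgn_eq)
  moreover have "\<beta> \<bullet> u = (\<Sum>i\<in>UNIV. \<bar>\<beta> $ i\<bar>)"
    unfolding inner_vec_eq_sum u_def by (simp add: mult_sgn_self)
  ultimately show ?thesis using 2 that by (auto simp: dual_exp_def pnorm_1)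
next
  case (3 R)
  obtain v where "(\<Sum>i\<in>UNIV. \<bar>v i\<bar> powr R) powr (1 / R) \<le> 1"
    "(\<Sum>i\<in>UNIV. \<beta> $ i * v i) = (\<Sum>i\<in>UNIV. \<bar>\<beta> $ i\<bar> powr (R / (R - 1))) powr (1 / (R / (R - 1)))"
    using Hoelder_inequality_sum_attained[OF _ 3(2) refl, of UNIV "\<lambda>i. \<beta> $ i"] by auto
  then show ?thesis
    using that[of "\<chi> i. v i"] 3 by (simp add: pnorm_ereal dual_exp_ereal inner_vec_eq_sum)
qed

lemma pnorm_scaleR_le:
  assumes "1 \<le> r"
  shows "pnorm r (c *\<^sub>R (x::real^'n::finite)) \<le> \<bar>c\<bar> * pnorm r x"
  using assms
proof (cases rule: ereal_ge_1_cases)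
  case 1 then show ?thesis by (simp add: pnorm_1 abs_mult sum_distrib_left)
next
  case 2
  show ?thesis unfolding 2 pnorm_infinity
    by (subst Max_le_iff) (auto simp: abs_mult intro!: mult_left_mono abs_le_Max_abs)
next
  case (3 R)
  have "(\<Sum>i\<in>UNIV. \<bar>(c *\<^sub>R x) $ i\<bar> powr R) = \<bar>c\<bar> powr R * (\<Sum>i\<in>UNIV. \<bar>x $ i\<bar> powr R)"
    by (simp add: abs_mult powr_mult sum_distrib_left)
  then show ?thesis using 3 by (simp add: pnorm_ereal powr_mult powr_powr sum_nonneg)
qed

section \<open>The logistic loss and its adversarial version\<close>

definition softplus :: "real \<Rightarrow> real" where
  "softplus t = ln (1 + exp t)"

lemma one_add_exp_pos: "0 < 1 + exp (t::real)"
  by (simp add: add_pos_pos)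

lemma softplus_pos: "0 < softplus t"
  unfolding softplus_def by (simp add: add_pos_pos)

lemma le_softplus: "t \<le> softplus t"
proof -
  have "ln (exp t) \<le> ln (1 + exp t)" by (subst ln_le_cancel_iff) (auto simp: add_pos_pos)
  then show ?thesis by (simp only: ln_exp softplus_def)
qed

lemma softplus_mono: "s \<le> t \<Longrightarrow> softplus s \<le> softplus t"
  unfolding softplus_def by (simp add: add_pos_pos)

lemma softplus_le_add_diff:
  assumes "s \<le> t"
  shows "softplus t \<le> softplus s + (t - s)"
proof -
  have "1 + exp t \<le> exp (t - s) * (1 + exp s)"
    using assms by (simp add: algebra_simps flip: exp_add)
  then have "ln (1 + exp t) \<le> ln (exp (t - s) * (1 + exp s))"
    by (simp add: add_pos_pos)
  also have "\<dots> = (t - s) + ln (1 + exp s)"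
    using one_add_exp_pos[of s] by (simp add: ln_mult)
  finally show ?thesis unfolding softplus_def by simp
qed

lemma abs_lab: "\<bar>lab y\<bar> = 1"
  by (simp add: lab_def)

lemma lab_mult_self: "lab y * lab y = 1"
  by (simp add: lab_def)

lemma neg_lab_mult_le_abs: "- lab y * t \<le> \<bar>t\<bar>"
  by (simp add: lab_def abs_ge_minus_self abs_ge_self)

lemma logloss_eq_softplus: "logloss \<beta> x y = softplus (- lab y * (\<beta> \<bullet> x))"
  by (simp add: logloss_def softplus_def)

lemma advloss_eq_softplus:
  "advloss p \<alpha> \<beta> x y = softplus (- lab y * (\<beta> \<bullet> x) + \<alpha> * pnorm (dual_exp p) \<beta>)"
  by (simp add: advloss_def softplus_def)

lemma advloss_pos: "0 < advloss p \<alpha> \<beta> x y"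
  by (simp add: advloss_eq_softplus softplus_pos)

text \<open>The adversary moves \<open>x\<close> by \<open>\<alpha>\<close> in the direction of the \<open>\<ell>\<^sub>p\<close>-unit vector dual to \<open>\<beta>\<close>.\<close>

lemma worst_loss_eq_advloss:
  assumes p: "1 \<le> p" and "0 \<le> \<alpha>"
  shows "worst_loss p \<alpha> \<beta> \<xi> = ennreal (advloss p \<alpha> \<beta> (fst \<xi>) (snd \<xi>))"
proof -
  obtain x y where \<xi>: "\<xi> = (x, y)" by fastforce
  define b where "b = pnorm (dual_exp p) \<beta>"
  have b0: "0 \<le> b" unfolding b_def by (rule pnorm_nonneg)
  have le: "logloss \<beta> (x + z) y \<le> advloss p \<alpha> \<beta> x y" if "pnorm p z \<le> \<alpha>" for z
  proof -
    have "- lab y * (\<beta> \<bullet> z) \<le> b * pnorm p z"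
      unfolding b_def using neg_lab_mult_le_abs abs_inner_le_pnorm_dual[OF p] by (rule order_trans)
    also have "\<dots> \<le> b * \<alpha>" using that b0 by (simp add: mult_left_mono)
    finally show ?thesis unfolding logloss_eq_softplus advloss_eq_softplus b_def[symmetric]
      by (intro softplus_mono) (simp add: inner_add_right algebra_simps)
  qed
  obtain u where u: "pnorm p u \<le> 1" "\<beta> \<bullet> u = b"
    using pnorm_dual_attained[OF p] unfolding b_def by blast
  define z where "z = (\<alpha> * - lab y) *\<^sub>R u"
  have "pnorm p z \<le> \<alpha> * pnorm p u"
    using pnorm_scaleR_le[OF p, of "\<alpha> * - lab y" u] \<open>0 \<le> \<alpha>\<close> by (simp add: z_def abs_mult abs_lab)
  also have "\<dots> \<le> \<alpha>" using u \<open>0 \<le> \<alpha>\<close> by (simp add: mult_left_le)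
  finally have "pnorm p z \<le> \<alpha>" .
  moreover have "logloss \<beta> (x + z) y = advloss p \<alpha> \<beta> x y"
    unfolding logloss_eq_softplus advloss_eq_softplus z_def b_def[symmetric] using u
    by (simp add: inner_add_right algebra_simps lab_mult_self)
  ultimately show ?thesis unfolding worst_loss_def \<xi>
    by (intro antisym SUP_least ennreal_leI SUP_upper2[of z]) (auto intro: le)
qed

lemma advloss_le_add_pnorm:
  assumes q: "1 \<le> q"
  shows "advloss p \<alpha> \<beta> x y \<le> advloss p \<alpha> \<beta> x' y + pnorm (dual_exp q) \<beta> * pnorm q (x - x')"
proof -
  define c where "c = \<alpha> * pnorm (dual_exp p) \<beta>"
  define t where "t = - lab y * (\<beta> \<bullet> x) + c"
  define s where "s = - lab y * (\<beta> \<bullet> x') + c"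
  have "t - s = - lab y * (\<beta> \<bullet> (x - x'))" unfolding t_def s_def by (simp add: inner_diff_right algebra_simps)
  also have "\<dots> \<le> pnorm (dual_exp q) \<beta> * pnorm q (x - x')"
    using neg_lab_mult_le_abs abs_inner_le_pnorm_dual[OF q] by (rule order_trans)
  finally have ts: "t - s \<le> pnorm (dual_exp q) \<beta> * pnorm q (x - x')" .
  have "softplus t \<le> softplus s + max 0 (t - s)"
    using softplus_le_add_diff[of s t] softplus_mono[of t s] by (cases "s \<le> t") auto
  moreover have "0 \<le> pnorm (dual_exp q) \<beta> * pnorm q (x - x')"
    using pnorm_nonneg by (rule mult_nonneg_nonneg) (rule pnorm_nonneg)
  ultimately show ?thesis
    unfolding advloss_eq_softplus c_def[symmetric] t_def[symmetric] s_def[symmetric] using ts by linarith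
qed

lemma xi_dist_nonneg: "0 \<le> \<kappa> \<Longrightarrow> 0 \<le> xi_dist q \<kappa> \<xi> \<xi>'"
  using pnorm_nonneg[of q] by (auto simp: xi_dist_def intro: add_nonneg_nonneg)

text \<open>
  For \<open>\<lambda> \<ge> \<parallel>\<beta>\<parallel>\<^sub>q\<^sub>*\<close> this is \<open>sup\<^sub>\<xi> \<ell>\<^sup>\<alpha>\<^sub>\<beta>(\<xi>) - \<lambda> d(\<xi>, \<xi>')\<close>: moving the features never pays,
  flipping the label costs \<open>\<lambda>\<kappa>\<close>.\<close>

definition regularized_loss :: "ereal \<Rightarrow> real \<Rightarrow> real ^ 'n::finite \<Rightarrow> real \<Rightarrow> real \<Rightarrow> (real^'n) \<times> bool \<Rightarrow> real" where
  "regularized_loss p \<alpha> \<beta> \<kappa> lam \<xi> =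
     max (advloss p \<alpha> \<beta> (fst \<xi>) (snd \<xi>)) (advloss p \<alpha> \<beta> (fst \<xi>) (\<not> snd \<xi>) - lam * \<kappa>)"

lemma regularized_loss_nonneg: "0 \<le> regularized_loss p \<alpha> \<beta> \<kappa> lam \<xi>"
  unfolding regularized_loss_def using advloss_pos[of p \<alpha> \<beta> "fst \<xi>" "snd \<xi>"] by linarith

lemma advloss_le_regularized_loss:
  assumes q: "1 \<le> q" and lam: "pnorm (dual_exp q) \<beta> \<le> lam"
  shows "advloss p \<alpha> \<beta> x y \<le> regularized_loss p \<alpha> \<beta> \<kappa> lam (x', y') + lam * xi_dist q \<kappa> (x, y) (x', y')"
proof -
  have "advloss p \<alpha> \<beta> x y \<le> advloss p \<alpha> \<beta> x' y + lam * pnorm q (x - x')"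
    using advloss_le_add_pnorm[OF q, of p \<alpha> \<beta> x y x'] mult_right_mono[OF lam pnorm_nonneg[of q "x - x'"]]
    by linarith
  then show ?thesis
    by (cases "y = y'") (auto simp: regularized_loss_def xi_dist_def algebra_simps)
qed

lemma continuous_on_lab [continuous_intros]:
  "continuous_on UNIV f \<Longrightarrow> continuous_on S (\<lambda>x. lab (f x))"
  by (rule continuous_on_subset[of UNIV], rule continuous_on_compose2[of UNIV lab UNIV f]) auto

lemma pnorm_measurable [measurable]: "pnorm p \<in> borel_measurable (borel :: (real^'n::finite) measure)"
  unfolding pnorm_def by measurable

lemma advloss_measurable:
  "(\<lambda>\<xi>::(real^'n::finite) \<times> bool. advloss p \<alpha> \<beta> (fst \<xi>) (f (snd \<xi>))) \<in> borel_measurable borel"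
proof (rule borel_measurable_continuous_onI)
  show "continuous_on UNIV (\<lambda>\<xi>::(real^'n) \<times> bool. advloss p \<alpha> \<beta> (fst \<xi>) (f (snd \<xi>)))"
    unfolding advloss_def using one_add_exp_pos
    by (intro continuous_intros continuous_on_ln continuous_on_compose2[of UNIV f UNIV snd])
      (auto simp: less_imp_neq[symmetric])
qed

lemma xi_dist_measurable [measurable]:
  "(\<lambda>z::((real^'n::finite) \<times> bool) \<times> ((real^'n) \<times> bool). xi_dist q \<kappa> (fst z) (snd z)) \<in> borel_measurable borel"
proof -
  have "(\<lambda>z::((real^'n) \<times> bool) \<times> ((real^'n) \<times> bool). fst (fst z) - fst (snd z)) \<in> borel_measurable borel"
    by (rule borel_measurable_continuous_onI) (intro continuous_intros)
  from measurable_compose[OF this pnorm_measurable]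
  have features: "(\<lambda>z::((real^'n) \<times> bool) \<times> ((real^'n) \<times> bool). pnorm q (fst (fst z) - fst (snd z)))
      \<in> borel_measurable borel"
    by (simp add: o_def)
  have labels: "(\<lambda>z::((real^'n) \<times> bool) \<times> ((real^'n) \<times> bool). \<kappa> * (\<bar>lab (snd (fst z)) - lab (snd (snd z))\<bar> / 2))
      \<in> borel_measurable borel"
    by (rule borel_measurable_continuous_onI) (intro continuous_intros, auto)
  have indicator: "(if a \<noteq> b then 1 else 0) = \<bar>lab a - lab b\<bar> / (2::real)" for a b
    by (simp add: lab_def)
  show ?thesis unfolding xi_dist_def indicator using borel_measurable_add[OF features labels] .
qed

lemma regularized_loss_measurable [measurable]:
  "regularized_loss p \<alpha> \<beta> \<kappa> lam \<in> borel_measurable (borel :: ((real^'n::finite) \<times> bool) measure)"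
  using borel_measurable_max[OF borel_measurable_diff[OF advloss_measurable[of p \<alpha> \<beta> Not]]
      advloss_measurable[of p \<alpha> \<beta> "\<lambda>y. y"]]
  unfolding regularized_loss_def[abs_def] by (simp add: max.commute)

lemma fst_borel_measurable [measurable]: "fst \<in> borel_measurable (borel :: ('a::topological_space \<times> 'b::topological_space) measure)"
  by (rule borel_measurable_continuous_onI) (intro continuous_intros)

lemma snd_borel_measurable [measurable]: "snd \<in> borel_measurable (borel :: ('a::topological_space \<times> 'b::topological_space) measure)"
  by (rule borel_measurable_continuous_onI) (intro continuous_intros)

lemma ennreal_average:
  assumes "0 < N" and "\<And>i. i < N \<Longrightarrow> 0 \<le> f i"
  shows "(\<Sum>i<N. ennreal (f i)) / of_nat N = ennreal ((\<Sum>i<N. f i) / real N)"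
proof -
  have "(\<Sum>i<N. ennreal (f i)) = ennreal (\<Sum>i<N. f i)"
    using assms(2) by (intro sum_ennreal) auto
  then show ?thesis
    using assms by (simp add: ennreal_of_nat_eq_real_of_nat) (subst divide_ennreal, auto intro: sum_nonneg)
qed

lemma ennreal_add_mult_INF:
  fixes f :: "'i \<Rightarrow> ennreal"
  assumes "I \<noteq> {}"
  shows "a + ennreal c * (INF i\<in>I. f i) = (INF i\<in>I. a + ennreal c * f i)"
proof -
  have "continuous_on UNIV (\<lambda>x. a + ennreal c * x)"
    by (intro continuous_intros ennreal_continuous_on_cmult) auto
  then have "(\<lambda>x. a + ennreal c * x) (Inf (f ` I)) = Inf ((\<lambda>x. a + ennreal c * x) ` f ` I)"
    using assms by (intro continuous_at_Inf_mono)
      (auto intro!: monoI add_left_mono mult_left_mono continuous_on_imp_continuous_within)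
  then show ?thesis by (simp add: image_comp)
qed

lemma ennreal_mult_add_mult:
  assumes "0 \<le> a" "0 \<le> b" "0 \<le> p" "0 \<le> q"
  shows "ennreal a * ennreal p + ennreal b * ennreal q = ennreal (p * a + q * b)"
  using assms by (simp add: ennreal_plus ennreal_mult mult.commute)

lemma ennreal_le_add_ennreal:
  assumes "x \<le> y + d" and "0 \<le> d"
  shows "ennreal x \<le> ennreal y + ennreal d"
proof (cases "0 \<le> y")
  case True
  with assms have "ennreal x \<le> ennreal (y + d)" by (intro ennreal_leI)
  with True assms show ?thesis by (simp add: ennreal_plus)
next
  case False
  with assms have "ennreal x \<le> ennreal d" by (intro ennreal_leI) simp
  then show ?thesis by (simp add: add_increasing)
qed

section \<open>Discrete distributions as Borel measures\<close>

definition borel_of_pmf :: "'a pmf \<Rightarrow> ('a::topological_space) measure" where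
  "borel_of_pmf \<mu> = distr (measure_pmf \<mu>) borel id"

lemma sets_borel_of_pmf [simp]: "sets (borel_of_pmf \<mu>) = sets borel"
  by (simp add: borel_of_pmf_def)

lemma prob_space_borel_of_pmf: "prob_space (borel_of_pmf \<mu>)"
  unfolding borel_of_pmf_def by (intro prob_space.prob_space_distr measure_pmf.prob_space_axioms) simp

lemma nn_integral_borel_of_pmf:
  "f \<in> borel_measurable borel \<Longrightarrow> (\<integral>\<^sup>+x. f x \<partial>borel_of_pmf \<mu>) = (\<integral>\<^sup>+x. f x \<partial>measure_pmf \<mu>)"
  unfolding borel_of_pmf_def by (subst nn_integral_distr) simp_all

lemma distr_borel_of_pmf:
  assumes "g \<in> borel_measurable borel"
  shows "distr (borel_of_pmf \<mu>) borel g = borel_of_pmf (map_pmf g \<mu>)"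
proof -
  have "distr (borel_of_pmf \<mu>) borel g = distr (measure_pmf \<mu>) borel g"
    unfolding borel_of_pmf_def by (subst distr_distr[OF assms]) simp_all
  also have "\<dots> = distr (distr (measure_pmf \<mu>) (count_space UNIV) g) borel id"
    by (subst distr_distr) auto
  finally show ?thesis unfolding borel_of_pmf_def map_pmf_rep_eq .
qed

definition empirical_pmf :: "nat \<Rightarrow> (nat \<Rightarrow> real ^ 'n::finite) \<Rightarrow> (nat \<Rightarrow> bool) \<Rightarrow> ((real^'n) \<times> bool) pmf" where
  "empirical_pmf N X Y = map_pmf (\<lambda>i. (X i, Y i)) (pmf_of_set {..<N})"

lemma empirical_eq_borel_of_pmf:
  fixes X :: "nat \<Rightarrow> real^'n::finite"
  assumes "0 < N"
  shows "empirical N X Y = borel_of_pmf (empirical_pmf N X Y)"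
proof -
  have "borel_of_pmf (empirical_pmf N X Y) = measure_of UNIV (sets borel) (emeasure (borel_of_pmf (empirical_pmf N X Y)))"
    using measure_of_of_measure[of "borel_of_pmf (empirical_pmf N X Y)"] by (simp add: borel_of_pmf_def)
  also have "\<dots> = empirical N X Y" unfolding empirical_def
  proof (rule measure_of_eq)
    fix A assume "A \<in> sigma_sets UNIV (sets (borel :: ((real^'n) \<times> bool) measure))"
    then have A: "A \<in> sets (borel :: ((real^'n) \<times> bool) measure)"
      using sets.sigma_sets_eq[of "borel :: ((real^'n) \<times> bool) measure"] by simp
    have "emeasure (borel_of_pmf (empirical_pmf N X Y)) A
        = emeasure (measure_pmf (pmf_of_set {..<N})) ((\<lambda>i. (X i, Y i)) -` A)"
      unfolding borel_of_pmf_def empirical_pmf_def using A by (subst emeasure_distr) auto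
    also have "\<dots> = ennreal (real (card ({..<N} \<inter> (\<lambda>i. (X i, Y i)) -` A)) / real N)"
      using \<open>0 < N\<close> by (subst emeasure_pmf_of_set) auto
    also have "{..<N} \<inter> (\<lambda>i. (X i, Y i)) -` A = {i. i < N \<and> (X i, Y i) \<in> A}" by auto
    finally show "emeasure (borel_of_pmf (empirical_pmf N X Y)) A
        = ennreal (real (card {i. i < N \<and> (X i, Y i) \<in> A}) / real N)" .
  qed auto
  finally show ?thesis by simp
qed

lemma nn_integral_empirical:
  fixes X :: "nat \<Rightarrow> real^'n::finite"
  assumes "0 < N" and "f \<in> borel_measurable borel"
  shows "(\<integral>\<^sup>+\<xi>. f \<xi> \<partial>empirical N X Y) = (\<Sum>i<N. f (X i, Y i)) / of_nat N"
  using assms nn_integral_pmf_of_set[of "{..<N}" "\<lambda>i. f (X i, Y i)"] lessThan_empty_iff[of N]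
  by (simp add: empirical_eq_borel_of_pmf nn_integral_borel_of_pmf empirical_pmf_def)

section \<open>Weak duality\<close>

lemma nn_integral_advloss_le_coupling:
  fixes Q P :: "((real^'n::finite) \<times> bool) measure"
  assumes q: "1 \<le> q" and lam: "pnorm (dual_exp q) \<beta> \<le> lam" and "0 \<le> \<kappa>"
    and C: "C \<in> couplings Q P"
  shows "(\<integral>\<^sup>+\<xi>. advloss p \<alpha> \<beta> (fst \<xi>) (snd \<xi>) \<partial>Q)
    \<le> (\<integral>\<^sup>+\<xi>. regularized_loss p \<alpha> \<beta> \<kappa> lam \<xi> \<partial>P) + ennreal lam * (\<integral>\<^sup>+z. xi_dist q \<kappa> (fst z) (snd z) \<partial>C)"
proof -
  have sets_C: "sets C = sets borel" and CQ: "distr C borel fst = Q" and CP: "distr C borel snd = P"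
    using C by (auto simp: couplings_def)
  have meas_C: "measurable C M = measurable borel M" for M :: "'x measure"
    using measurable_cong_sets[OF sets_C refl] .
  have lam0: "0 \<le> lam" using order_trans[OF pnorm_nonneg lam] .
  have "(\<integral>\<^sup>+\<xi>. advloss p \<alpha> \<beta> (fst \<xi>) (snd \<xi>) \<partial>Q) = (\<integral>\<^sup>+z. advloss p \<alpha> \<beta> (fst (fst z)) (snd (fst z)) \<partial>C)"
    unfolding CQ[symmetric] using advloss_measurable[of p \<alpha> \<beta> "\<lambda>y. y"]
    by (subst nn_integral_distr) (auto simp: meas_C)
  also have "\<dots> \<le> (\<integral>\<^sup>+z. ennreal (regularized_loss p \<alpha> \<beta> \<kappa> lam (snd z)) + ennreal lam * xi_dist q \<kappa> (fst z) (snd z) \<partial>C)"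
  proof (rule nn_integral_mono)
    fix z :: "((real^'n) \<times> bool) \<times> ((real^'n) \<times> bool)"
    obtain x y x' y' where z: "z = ((x, y), (x', y'))" by (metis prod.collapse)
    have "ennreal (advloss p \<alpha> \<beta> x y)
        \<le> ennreal (regularized_loss p \<alpha> \<beta> \<kappa> lam (x', y') + lam * xi_dist q \<kappa> (x, y) (x', y'))"
      by (intro ennreal_leI advloss_le_regularized_loss[OF q lam])
    also have "\<dots> = ennreal (regularized_loss p \<alpha> \<beta> \<kappa> lam (x', y')) + ennreal lam * xi_dist q \<kappa> (x, y) (x', y')"
      using lam0 xi_dist_nonneg[OF \<open>0 \<le> \<kappa>\<close>, of q "(x, y)" "(x', y')"]
      by (subst ennreal_plus) (auto simp: ennreal_mult regularized_loss_nonneg)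
    finally show "ennreal (advloss p \<alpha> \<beta> (fst (fst z)) (snd (fst z)))
        \<le> ennreal (regularized_loss p \<alpha> \<beta> \<kappa> lam (snd z)) + ennreal lam * xi_dist q \<kappa> (fst z) (snd z)"
      by (simp add: z)
  qed
  also have "\<dots> = (\<integral>\<^sup>+z. regularized_loss p \<alpha> \<beta> \<kappa> lam (snd z) \<partial>C) + ennreal lam * (\<integral>\<^sup>+z. xi_dist q \<kappa> (fst z) (snd z) \<partial>C)"
    by (simp add: nn_integral_add nn_integral_cmult meas_C)
  also have "(\<integral>\<^sup>+z. regularized_loss p \<alpha> \<beta> \<kappa> lam (snd z) \<partial>C) = (\<integral>\<^sup>+\<xi>. regularized_loss p \<alpha> \<beta> \<kappa> lam \<xi> \<partial>P)"
    unfolding CP[symmetric] by (subst nn_integral_distr) (auto simp: meas_C)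
  finally show ?thesis .
qed

lemma nn_integral_advloss_le_wass:
  fixes Q P :: "((real^'n::finite) \<times> bool) measure"
  assumes "1 \<le> q" and "pnorm (dual_exp q) \<beta> \<le> lam" and "0 \<le> \<kappa>" and "couplings Q P \<noteq> {}"
  shows "(\<integral>\<^sup>+\<xi>. advloss p \<alpha> \<beta> (fst \<xi>) (snd \<xi>) \<partial>Q)
    \<le> (\<integral>\<^sup>+\<xi>. regularized_loss p \<alpha> \<beta> \<kappa> lam \<xi> \<partial>P) + ennreal lam * wass q \<kappa> Q P"
  unfolding wass_def ennreal_add_mult_INF[OF assms(4)]
  using nn_integral_advloss_le_coupling[OF assms(1-3)] by (rule INF_greatest)

lemma dr_aro_inner_le_prog_obj:
  fixes X :: "nat \<Rightarrow> real^'n::finite"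
  assumes p: "1 \<le> p" and q: "1 \<le> q" and "0 \<le> \<alpha>" and "0 \<le> \<kappa>" and "0 < N" and "0 \<le> \<epsilon>"
    and feasible: "prog_feasible \<kappa> \<alpha> p q N X Y \<beta> lam s"
  shows "dr_aro_inner \<epsilon> \<kappa> \<alpha> p q N X Y \<beta> \<le> ennreal (prog_obj \<epsilon> N lam s)"
  unfolding dr_aro_inner_def
proof (rule SUP_least)
  fix Q assume "Q \<in> wball q \<kappa> \<epsilon> (empirical N X Y)"
  then have W: "wass q \<kappa> Q (empirical N X Y) \<le> ennreal \<epsilon>" by (simp add: wball_def)
  then have "couplings Q (empirical N X Y) \<noteq> {}" by (auto simp: wass_def top_unique)
  have lam: "pnorm (dual_exp q) \<beta> \<le> lam" "0 \<le> lam" and s: "\<And>i. i < N \<Longrightarrow> 0 \<le> s i"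
    using feasible by (auto simp: prog_feasible_def)
  have "(\<integral>\<^sup>+\<xi>. regularized_loss p \<alpha> \<beta> \<kappa> lam \<xi> \<partial>empirical N X Y)
      = (\<Sum>i<N. ennreal (regularized_loss p \<alpha> \<beta> \<kappa> lam (X i, Y i))) / of_nat N"
    using \<open>0 < N\<close> by (intro nn_integral_empirical) auto
  also have "\<dots> = ennreal ((\<Sum>i<N. regularized_loss p \<alpha> \<beta> \<kappa> lam (X i, Y i)) / real N)"
    using \<open>0 < N\<close> by (rule ennreal_average) (rule regularized_loss_nonneg)
  also have "\<dots> \<le> ennreal ((\<Sum>i<N. s i) / real N)"
    using feasible by (intro ennreal_leI divide_right_mono sum_mono)
      (auto simp: prog_feasible_def regularized_loss_def)
  finally have empirical_part: "(\<integral>\<^sup>+\<xi>. regularized_loss p \<alpha> \<beta> \<kappa> lam \<xi> \<partial>empirical N X Y)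
      \<le> ennreal ((\<Sum>i<N. s i) / real N)" .
  have "(\<integral>\<^sup>+\<xi>. worst_loss p \<alpha> \<beta> \<xi> \<partial>Q) = (\<integral>\<^sup>+\<xi>. advloss p \<alpha> \<beta> (fst \<xi>) (snd \<xi>) \<partial>Q)"
    by (simp add: worst_loss_eq_advloss[OF p \<open>0 \<le> \<alpha>\<close>])
  also have "\<dots> \<le> (\<integral>\<^sup>+\<xi>. regularized_loss p \<alpha> \<beta> \<kappa> lam \<xi> \<partial>empirical N X Y) + ennreal lam * wass q \<kappa> Q (empirical N X Y)"
    by (rule nn_integral_advloss_le_wass) fact+
  also have "\<dots> \<le> ennreal ((\<Sum>i<N. s i) / real N) + ennreal lam * ennreal \<epsilon>"
    by (intro add_mono mult_left_mono empirical_part W) auto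
  also have "\<dots> = ennreal ((\<Sum>i<N. s i) / real N + lam * \<epsilon>)"
    using lam s \<open>0 \<le> \<epsilon>\<close> sum_nonneg[of "{..<N}" s] by (simp add: ennreal_mult ennreal_plus)
  also have "\<dots> = ennreal (prog_obj \<epsilon> N lam s)"
    by (simp add: prog_obj_def algebra_simps)
  finally show "(\<integral>\<^sup>+\<xi>. worst_loss p \<alpha> \<beta> \<xi> \<partial>Q) \<le> ennreal (prog_obj \<epsilon> N lam s)" .
qed

section \<open>Strong duality of the inner linear program\<close>

lemma finite_max_below:
  fixes F :: "real set"
  assumes "finite F" and "b \<in> F" and "b < x"
  obtains y where "y \<in> F" "b \<le> y" "y < x" "\<And>z. z \<in> F \<Longrightarrow> z < x \<Longrightarrow> z \<le> y"
proof -
  let ?y = "Max {z \<in> F. z < x}"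
  have "?y \<in> {z \<in> F. z < x}" using assms by (intro Max_in) auto
  moreover have "z \<le> ?y" if "z \<in> F" "z < x" for z using assms that by (intro Max_ge) auto
  ultimately show ?thesis using that assms by auto
qed

lemma fractional_weights_exist:
  fixes A E :: "nat set" and B :: real
  assumes "A \<subseteq> {..<N}" "E \<subseteq> {..<N}" "A \<inter> E = {}" and "card A \<le> B" "B \<le> card A + card E"
  obtains t where "\<And>i. 0 \<le> t i \<and> t i \<le> 1" "\<And>i. i \<in> A \<Longrightarrow> t i = 1"
    "\<And>i. i \<notin> A \<Longrightarrow> i \<notin> E \<Longrightarrow> t i = 0" "(\<Sum>i<N. t i) = B"
proof -
  \<comment> \<open>for \<open>E = {}\<close> this is \<open>0\<close> by \<open>x / 0 = 0\<close>\<close>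
  define \<tau> where "\<tau> = (B - card A) / card E"
  have "0 \<le> \<tau> \<and> \<tau> \<le> 1 \<and> \<tau> * card E = B - card A"
  proof (cases "card E = 0")
    case True
    with assms(4,5) show ?thesis by (simp add: \<tau>_def)
  next
    case False
    with assms(4,5) show ?thesis by (auto simp: \<tau>_def field_simps)
  qed
  then have "0 \<le> \<tau>" "\<tau> \<le> 1" "\<tau> * card E = B - card A" by auto
  define t where "t i = of_bool (i \<in> A) + \<tau> * of_bool (i \<in> E)" for i
  have "(\<Sum>i<N. t i) = card A + \<tau> * card E"
    using Int_absorb1[OF \<open>A \<subseteq> {..<N}\<close>] Int_absorb1[OF \<open>E \<subseteq> {..<N}\<close>]
    by (simp add: t_def sum.distrib flip: sum_distrib_left)
  then have "(\<Sum>i<N. t i) = B" using \<open>\<tau> * card E = B - card A\<close> by simp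
  moreover have "0 \<le> t i \<and> t i \<le> 1" for i
    using \<open>A \<inter> E = {}\<close> \<open>0 \<le> \<tau>\<close> \<open>\<tau> \<le> 1\<close> by (auto simp: t_def)
  ultimately show ?thesis using that[of t] \<open>A \<inter> E = {}\<close> by (auto simp: t_def)
qed

text \<open>
  The breakpoint \<open>\<lambda>\<close> is the smallest value \<open>\<ge> b\<close> among \<open>b\<close> and the \<open>c\<^sub>i\<close> above which at most \<open>B\<close> of the
  \<open>c\<^sub>i\<close> lie; the \<open>c\<^sub>i\<close> equal to \<open>\<lambda>\<close> fill the remaining budget fractionally.\<close>

lemma breakpoint_weights_exist:
  fixes c :: "nat \<Rightarrow> real" and b B :: real
  assumes "0 \<le> B"
  obtains lam t where "b \<le> lam" "\<And>i. 0 \<le> t i \<and> t i \<le> 1"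
    "\<And>i. i < N \<Longrightarrow> lam < c i \<Longrightarrow> t i = 1" "\<And>i. i < N \<Longrightarrow> c i < lam \<Longrightarrow> t i = 0"
    "(\<Sum>i<N. t i) \<le> B" "lam = b \<or> (\<Sum>i<N. t i) = B"
proof -
  define cand where "cand = insert b (c ` {..<N})"
  define above where "above lam = {i. i < N \<and> lam < c i}" for lam
  define T where "T = {lam \<in> cand. b \<le> lam \<and> card (above lam) \<le> B}"
  have "finite cand" by (simp add: cand_def)
  have "Max cand \<in> T"
  proof -
    have "c i \<le> Max cand" if "i < N" for i
      using \<open>finite cand\<close> that by (simp add: cand_def)
    then have "above (Max cand) = {}" by (force simp: above_def)
    moreover have "b \<le> Max cand" using \<open>finite cand\<close> by (simp add: cand_def)
    ultimately show ?thesis using Max_in[OF \<open>finite cand\<close>] \<open>0 \<le> B\<close>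
      by (auto simp: T_def cand_def)
  qed
  define lam where "lam = Min T"
  have "finite T" using \<open>finite cand\<close> by (simp add: T_def)
  then have "lam \<in> T" and lam_min: "\<And>y. y \<in> T \<Longrightarrow> lam \<le> y"
    using \<open>Max cand \<in> T\<close> by (auto simp: lam_def intro: Min_in)
  define A where "A = above lam"
  define E where "E = {i. i < N \<and> c i = lam}"
  have "A \<subseteq> {..<N}" "E \<subseteq> {..<N}" "A \<inter> E = {}" by (auto simp: A_def E_def above_def)
  have "b \<le> lam" and "card A \<le> B" using \<open>lam \<in> T\<close> by (auto simp: T_def A_def)
  have minimal: "B < card A + card E" if "lam \<noteq> b"
  proof -
    from that \<open>b \<le> lam\<close> have "b < lam" by simp
    then obtain y where "y \<in> cand" "b \<le> y" "y < lam" and no_between: "\<And>z. z \<in> cand \<Longrightarrow> z < lam \<Longrightarrow> z \<le> y"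
      using finite_max_below[OF \<open>finite cand\<close>] by (auto simp: cand_def)
    have "y < c i \<longleftrightarrow> lam \<le> c i" if "i < N" for i
      using no_between[of "c i"] that \<open>y < lam\<close> by (force simp: cand_def)
    then have "above y = A \<union> E" by (auto simp: above_def A_def E_def)
    moreover have "y \<notin> T" using lam_min \<open>y < lam\<close> by force
    ultimately show ?thesis using \<open>y \<in> cand\<close> \<open>b \<le> y\<close> \<open>A \<inter> E = {}\<close>
      by (auto simp: T_def A_def E_def above_def card_Un_disjoint)
  qed
  obtain t where "\<And>i. 0 \<le> t i \<and> t i \<le> 1" "\<And>i. i \<in> A \<Longrightarrow> t i = 1"
      "\<And>i. i \<notin> A \<Longrightarrow> i \<notin> E \<Longrightarrow> t i = 0" "(\<Sum>i<N. t i) = min B (card A + card E)"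
    using fractional_weights_exist[OF \<open>A \<subseteq> {..<N}\<close> \<open>E \<subseteq> {..<N}\<close> \<open>A \<inter> E = {}\<close>,
        of "min B (card A + card E)"] \<open>card A \<le> B\<close> by force
  with that[of lam t] \<open>b \<le> lam\<close> minimal show ?thesis
    by (force simp: A_def E_def above_def)
qed

text \<open>
  An optimal \<open>\<lambda>\<close> of \<open>min\<^sub>\<lambda>\<^sub>\<ge>\<^sub>b \<epsilon>\<lambda> + (1/N) \<Sum>\<^sub>i max(0, D\<^sub>i - \<lambda>\<kappa>)\<close> together with optimal dual weights \<open>t\<close>,
  expressed by complementary slackness.\<close>

lemma threshold_flip_weights_exist:
  fixes D :: "nat \<Rightarrow> real" and b \<kappa> \<epsilon> :: real and N :: nat
  assumes "0 \<le> \<kappa>" and "0 < \<epsilon>"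
  obtains lam t where "b \<le> lam" "\<And>i. 0 \<le> t i \<and> t i \<le> 1"
    "\<And>i. i < N \<Longrightarrow> lam * \<kappa> < D i \<Longrightarrow> t i = 1"
    "\<And>i. i < N \<Longrightarrow> D i < lam * \<kappa> \<Longrightarrow> t i = 0"
    "\<kappa> * (\<Sum>i<N. t i) \<le> \<epsilon> * N" "lam = b \<or> \<kappa> * (\<Sum>i<N. t i) = \<epsilon> * N"
proof (cases "\<kappa> = 0")
  case True
  then show ?thesis
    using that[of b "\<lambda>i. of_bool (0 < D i)"] \<open>0 < \<epsilon>\<close> by auto
next
  case False
  with \<open>0 \<le> \<kappa>\<close> have "0 < \<kappa>" by simp
  have "0 \<le> \<epsilon> * N / \<kappa>" using \<open>0 < \<epsilon>\<close> \<open>0 < \<kappa>\<close> by simp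
  from breakpoint_weights_exist[OF this, of b N "\<lambda>i. D i / \<kappa>"] obtain lam t where
    "b \<le> lam" "\<And>i. 0 \<le> t i \<and> t i \<le> 1"
    "\<And>i. i < N \<Longrightarrow> lam < D i / \<kappa> \<Longrightarrow> t i = 1" "\<And>i. i < N \<Longrightarrow> D i / \<kappa> < lam \<Longrightarrow> t i = 0"
    "(\<Sum>i<N. t i) \<le> \<epsilon> * N / \<kappa>" "lam = b \<or> (\<Sum>i<N. t i) = \<epsilon> * N / \<kappa>"
    by blast
  with \<open>0 < \<kappa>\<close> show ?thesis using that[of lam t] by (auto simp: field_simps)
qed

lemma primal_dual_value_eq:
  fixes L L' t :: "nat \<Rightarrow> real" and lam b \<kappa> \<epsilon> :: real and N :: nat
  assumes "0 < N"
    and "\<And>i. i < N \<Longrightarrow> lam * \<kappa> < L' i - L i \<Longrightarrow> t i = 1"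
    and "\<And>i. i < N \<Longrightarrow> L' i - L i < lam * \<kappa> \<Longrightarrow> t i = 0"
    and "lam = b \<or> \<kappa> * (\<Sum>i<N. t i) = \<epsilon> * N"
  shows "(\<Sum>i<N. (1 - t i) * L i + t i * L' i) / N + (\<epsilon> - \<kappa> * (\<Sum>i<N. t i) / N) * b
       = \<epsilon> * lam + (1 / real N) * (\<Sum>i<N. max (L i) (L' i - lam * \<kappa>))"
proof -
  have "(1 - t i) * L i + t i * L' i = max (L i) (L' i - lam * \<kappa>) + lam * \<kappa> * t i" if "i < N" for i
    using assms(2,3)[OF that] by (cases "L' i - L i" "lam * \<kappa>" rule: linorder_cases) (auto simp: max_def algebra_simps)
  then have V: "(\<Sum>i<N. (1 - t i) * L i + t i * L' i) / N
      = (\<Sum>i<N. max (L i) (L' i - lam * \<kappa>)) / N + lam * (\<kappa> * (\<Sum>i<N. t i) / N)"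
    by (simp add: sum.distrib sum_distrib_left add_divide_distrib mult.assoc)
  from assms(4) show ?thesis
  proof
    assume "\<kappa> * (\<Sum>i<N. t i) = \<epsilon> * N"
    then have "\<kappa> * (\<Sum>i<N. t i) / N = \<epsilon>" using \<open>0 < N\<close> by simp
    then show ?thesis unfolding V by (simp add: algebra_simps)
  qed (unfold V, simp add: algebra_simps)
qed

section \<open>Nearly worst-case distributions\<close>

definition bernoulli_pair_mean :: "real \<Rightarrow> real \<Rightarrow> (bool \<times> bool \<Rightarrow> real) \<Rightarrow> real" where
  "bernoulli_pair_mean t m \<phi> =
     t * (m * \<phi> (True, True) + (1 - m) * \<phi> (True, False))
     + (1 - t) * (m * \<phi> (False, True) + (1 - m) * \<phi> (False, False))"

lemma bernoulli_pair_mean_mono: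
  assumes "0 \<le> t" "t \<le> 1" "0 \<le> m" "m \<le> 1" "\<And>k. \<phi> k \<le> \<psi> k"
  shows "bernoulli_pair_mean t m \<phi> \<le> bernoulli_pair_mean t m \<psi>"
  unfolding bernoulli_pair_mean_def using assms by (intro add_mono mult_left_mono) auto

lemma bernoulli_pair_mean_nonneg:
  "0 \<le> t \<Longrightarrow> t \<le> 1 \<Longrightarrow> 0 \<le> m \<Longrightarrow> m \<le> 1 \<Longrightarrow> (\<And>k. 0 \<le> \<phi> k) \<Longrightarrow> 0 \<le> bernoulli_pair_mean t m \<phi>"
  unfolding bernoulli_pair_mean_def by (intro add_nonneg_nonneg mult_nonneg_nonneg) auto

lemma nn_integral_pair_bernoulli:
  assumes t: "0 \<le> t" "t \<le> 1" and m: "0 \<le> m" "m \<le> 1" and "\<And>k. 0 \<le> \<phi> k"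
  shows "(\<integral>\<^sup>+k. ennreal (\<phi> k) \<partial>pair_pmf (bernoulli_pmf t) (bernoulli_pmf m)) = ennreal (bernoulli_pair_mean t m \<phi>)"
proof -
  define \<psi> where "\<psi> f = m * \<phi> (f, True) + (1 - m) * \<phi> (f, False)" for f
  have "0 \<le> \<psi> f" for f using m \<open>\<And>k. 0 \<le> \<phi> k\<close> by (simp add: \<psi>_def)
  have "(\<integral>\<^sup>+g. ennreal (\<phi> (f, g)) \<partial>bernoulli_pmf m) = ennreal (\<psi> f)" for f
    using m \<open>\<And>k. 0 \<le> \<phi> k\<close> by (simp add: \<psi>_def ennreal_mult_add_mult)
  then have "(\<integral>\<^sup>+k. ennreal (\<phi> k) \<partial>pair_pmf (bernoulli_pmf t) (bernoulli_pmf m))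
      = (\<integral>\<^sup>+f. ennreal (\<psi> f) \<partial>bernoulli_pmf t)"
    by (simp add: nn_integral_pair_pmf')
  also have "\<dots> = ennreal (bernoulli_pair_mean t m \<phi>)"
    using t \<open>\<And>f. 0 \<le> \<psi> f\<close> by (simp add: ennreal_mult_add_mult bernoulli_pair_mean_def \<psi>_def)
  finally show ?thesis .
qed

definition perturbation_pmf :: "nat \<Rightarrow> (nat \<Rightarrow> bool \<times> bool \<Rightarrow> 'a) \<Rightarrow> (nat \<Rightarrow> real) \<Rightarrow> real \<Rightarrow> 'a pmf" where
  "perturbation_pmf N G t m =
     pmf_of_set {..<N} \<bind> (\<lambda>i. map_pmf (G i) (pair_pmf (bernoulli_pmf (t i)) (bernoulli_pmf m)))"

lemma nn_integral_perturbation_pmf: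
  assumes "0 < N" and t: "\<And>i. 0 \<le> t i" "\<And>i. t i \<le> 1" and m: "0 \<le> m" "m \<le> 1"
    and h: "\<And>z. 0 \<le> h z"
  shows "(\<integral>\<^sup>+z. ennreal (h z) \<partial>perturbation_pmf N G t m)
    = ennreal ((\<Sum>i<N. bernoulli_pair_mean (t i) m (\<lambda>k. h (G i k))) / real N)"
proof -
  have "(\<integral>\<^sup>+z. ennreal (h z) \<partial>perturbation_pmf N G t m)
      = (\<integral>\<^sup>+i. ennreal (bernoulli_pair_mean (t i) m (\<lambda>k. h (G i k))) \<partial>pmf_of_set {..<N})"
    unfolding perturbation_pmf_def using t m h by (simp add: nn_integral_pair_bernoulli)
  also have "\<dots> = (\<Sum>i<N. ennreal (bernoulli_pair_mean (t i) m (\<lambda>k. h (G i k)))) / of_nat N"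
    using \<open>0 < N\<close> by (subst nn_integral_pmf_of_set) auto
  also have "\<dots> = ennreal ((\<Sum>i<N. bernoulli_pair_mean (t i) m (\<lambda>k. h (G i k))) / real N)"
    using \<open>0 < N\<close> t m h by (intro ennreal_average bernoulli_pair_mean_nonneg)
  finally show ?thesis .
qed

lemma map_snd_perturbation_pmf:
  assumes "\<And>i k. snd (G i k) = H i"
  shows "map_pmf snd (perturbation_pmf N G t m) = map_pmf H (pmf_of_set {..<N})"
proof -
  have "snd \<circ> G i = (\<lambda>_. H i)" for i using assms by auto
  then have "map_pmf snd (perturbation_pmf N G t m) = pmf_of_set {..<N} \<bind> (\<lambda>i. return_pmf (H i))"
    by (simp add: perturbation_pmf_def map_bind_pmf pmf.map_comp)
  then show ?thesis by (simp add: map_pmf_def)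
qed

text \<open>
  With probability \<open>t\<^sub>i\<close> the label of the \<open>i\<close>-th sample is flipped, and independently with probability
  \<open>m\<close> its features are moved by \<open>v\<close> against the (new) label; the second component records the sample.\<close>

definition flip_and_shift :: "(nat \<Rightarrow> real ^ 'n::finite) \<Rightarrow> (nat \<Rightarrow> bool) \<Rightarrow> real ^ 'n \<Rightarrow> nat \<Rightarrow> bool \<times> bool
    \<Rightarrow> ((real^'n) \<times> bool) \<times> ((real^'n) \<times> bool)" where
  "flip_and_shift X Y v i k =
     (let y = (if fst k then \<not> Y i else Y i) in ((X i - (if snd k then lab y else 0) *\<^sub>R v, y), (X i, Y i)))"

lemma xi_dist_flip_and_shift_le:
  assumes "1 \<le> q"
  shows "xi_dist q \<kappa> (fst (flip_and_shift X Y v i k)) (snd (flip_and_shift X Y v i k))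
    \<le> \<kappa> * of_bool (fst k) + pnorm q v * of_bool (snd k)"
proof -
  have "pnorm q (- ((if snd k then lab y else 0) *\<^sub>R v)) \<le> pnorm q v * of_bool (snd k)" for y
    using pnorm_scaleR_le[OF assms, of "- lab y" v] pnorm_scaleR_le[OF assms, of 0 v] pnorm_nonneg[of q v]
    by (auto simp: abs_lab)
  then show ?thesis by (auto simp: flip_and_shift_def xi_dist_def Let_def)
qed

lemma advloss_flip_and_shift_ge:
  assumes "0 \<le> \<alpha>"
  shows "(if snd k then \<beta> \<bullet> v - \<bar>\<beta> \<bullet> X i\<bar> else advloss p \<alpha> \<beta> (X i) (if fst k then \<not> Y i else Y i))
    \<le> advloss p \<alpha> \<beta> (fst (fst (flip_and_shift X Y v i k))) (snd (fst (flip_and_shift X Y v i k)))"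
proof (cases "snd k")
  case True
  define y where "y = (if fst k then \<not> Y i else Y i)"
  define c where "c = - lab y * (\<beta> \<bullet> X i) + \<beta> \<bullet> v + \<alpha> * pnorm (dual_exp p) \<beta>"
  have "fst (flip_and_shift X Y v i k) = (X i - lab y *\<^sub>R v, y)"
    using True by (simp add: flip_and_shift_def y_def Let_def)
  moreover have "- lab y * (\<beta> \<bullet> (X i - lab y *\<^sub>R v)) = - lab y * (\<beta> \<bullet> X i) + \<beta> \<bullet> v"
    by (simp add: inner_diff_right algebra_simps lab_mult_self)
  ultimately have "advloss p \<alpha> \<beta> (fst (fst (flip_and_shift X Y v i k))) (snd (fst (flip_and_shift X Y v i k)))
      = softplus c"
    by (simp add: advloss_eq_softplus c_def)
  moreover have "\<beta> \<bullet> v - \<bar>\<beta> \<bullet> X i\<bar> \<le> c"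
    using neg_lab_mult_le_abs[of y "- (\<beta> \<bullet> X i)"] mult_nonneg_nonneg[OF assms pnorm_nonneg[of "dual_exp p" \<beta>]]
    by (simp add: c_def)
  ultimately show ?thesis using True le_softplus[of c] by simp
qed (simp add: flip_and_shift_def Let_def)

lemma flip_and_shift_coupling:
  fixes X :: "nat \<Rightarrow> real^'n::finite"
  assumes "0 < N"
  shows "borel_of_pmf (perturbation_pmf N (flip_and_shift X Y v) t m)
    \<in> couplings (borel_of_pmf (map_pmf fst (perturbation_pmf N (flip_and_shift X Y v) t m))) (empirical N X Y)"
proof -
  have "map_pmf snd (perturbation_pmf N (flip_and_shift X Y v) t m) = empirical_pmf N X Y"
    unfolding empirical_pmf_def by (rule map_snd_perturbation_pmf) (simp add: flip_and_shift_def Let_def)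
  then show ?thesis
    using assms by (simp add: couplings_def prob_space_borel_of_pmf distr_borel_of_pmf empirical_eq_borel_of_pmf)
qed

lemma nn_integral_xi_dist_flip_and_shift_le:
  fixes X :: "nat \<Rightarrow> real^'n::finite" and v :: "real^'n" and t :: "nat \<Rightarrow> real" and m :: real
  assumes q: "1 \<le> q" and "0 \<le> \<kappa>" and "0 < N" and t: "\<And>i. 0 \<le> t i" "\<And>i. t i \<le> 1" and m: "0 \<le> m" "m \<le> 1"
  shows "(\<integral>\<^sup>+z. xi_dist q \<kappa> (fst z) (snd z) \<partial>borel_of_pmf (perturbation_pmf N (flip_and_shift X Y v) t m))
    \<le> ennreal ((\<kappa> * (\<Sum>i<N. t i) + N * (m * pnorm q v)) / N)"
proof -
  have "(\<integral>\<^sup>+z. xi_dist q \<kappa> (fst z) (snd z) \<partial>borel_of_pmf (perturbation_pmf N (flip_and_shift X Y v) t m))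
      = ennreal ((\<Sum>i<N. bernoulli_pair_mean (t i) m
          (\<lambda>k. xi_dist q \<kappa> (fst (flip_and_shift X Y v i k)) (snd (flip_and_shift X Y v i k)))) / N)"
    using nn_integral_perturbation_pmf[where t=t and m=m and G="flip_and_shift X Y v"
        and h="\<lambda>z. xi_dist q \<kappa> (fst z) (snd z)", OF \<open>0 < N\<close> t m xi_dist_nonneg[OF \<open>0 \<le> \<kappa>\<close>]]
    by (simp add: nn_integral_borel_of_pmf)
  also have "\<dots> \<le> ennreal ((\<Sum>i<N. t i * \<kappa> + m * pnorm q v) / N)"
  proof (intro ennreal_leI divide_right_mono sum_mono)
    fix i
    have "bernoulli_pair_mean (t i) m
        (\<lambda>k. xi_dist q \<kappa> (fst (flip_and_shift X Y v i k)) (snd (flip_and_shift X Y v i k)))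
      \<le> bernoulli_pair_mean (t i) m (\<lambda>k. \<kappa> * of_bool (fst k) + pnorm q v * of_bool (snd k))"
      using t m by (intro bernoulli_pair_mean_mono xi_dist_flip_and_shift_le[OF q])
    then show "bernoulli_pair_mean (t i) m
        (\<lambda>k. xi_dist q \<kappa> (fst (flip_and_shift X Y v i k)) (snd (flip_and_shift X Y v i k)))
      \<le> t i * \<kappa> + m * pnorm q v"
      by (simp add: bernoulli_pair_mean_def algebra_simps)
  qed simp
  also have "(\<Sum>i<N. t i * \<kappa> + m * pnorm q v) = \<kappa> * (\<Sum>i<N. t i) + N * (m * pnorm q v)"
    by (simp add: sum.distrib sum_distrib_left mult.commute)
  finally show ?thesis .
qed

lemma flip_and_shift_in_wball:
  fixes X :: "nat \<Rightarrow> real^'n::finite" and v :: "real^'n" and t :: "nat \<Rightarrow> real" and m \<epsilon> :: real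
  assumes q: "1 \<le> q" and "0 \<le> \<kappa>" and "0 < N" and t: "\<And>i. 0 \<le> t i" "\<And>i. t i \<le> 1"
    and m: "0 \<le> m" "m \<le> 1" and budget: "\<kappa> * (\<Sum>i<N. t i) + N * (m * pnorm q v) \<le> \<epsilon> * N"
  shows "borel_of_pmf (map_pmf fst (perturbation_pmf N (flip_and_shift X Y v) t m)) \<in> wball q \<kappa> \<epsilon> (empirical N X Y)"
proof -
  define C where "C = perturbation_pmf N (flip_and_shift X Y v) t m"
  have "wass q \<kappa> (borel_of_pmf (map_pmf fst C)) (empirical N X Y)
      \<le> (\<integral>\<^sup>+z. xi_dist q \<kappa> (fst z) (snd z) \<partial>borel_of_pmf C)"
    unfolding wass_def C_def using flip_and_shift_coupling[OF \<open>0 < N\<close>] by (rule INF_lower)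
  also have "\<dots> \<le> ennreal ((\<kappa> * (\<Sum>i<N. t i) + N * (m * pnorm q v)) / N)"
    unfolding C_def by (rule nn_integral_xi_dist_flip_and_shift_le[where t=t, OF q \<open>0 \<le> \<kappa>\<close> \<open>0 < N\<close> t m])
  also have "\<dots> \<le> ennreal \<epsilon>"
    using budget \<open>0 < N\<close> by (intro ennreal_leI) (simp add: divide_le_eq mult.commute)
  finally have "wass q \<kappa> (borel_of_pmf (map_pmf fst C)) (empirical N X Y) \<le> ennreal \<epsilon>" .
  moreover have "(\<integral>\<^sup>+\<xi>. xi_dist q \<kappa> \<xi> (0, True) \<partial>borel_of_pmf (map_pmf fst C)) < \<infinity>"
  proof -
    have "(\<lambda>\<xi>::(real^'n) \<times> bool. (\<xi>, (0::real^'n, True))) \<in> borel_measurable borel"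
      by (rule borel_measurable_continuous_onI) (intro continuous_intros)
    from measurable_compose[OF this xi_dist_measurable]
    have "(\<lambda>\<xi>::(real^'n) \<times> bool. xi_dist q \<kappa> \<xi> (0, True)) \<in> borel_measurable borel"
      by (simp add: o_def)
    then have "(\<integral>\<^sup>+\<xi>. xi_dist q \<kappa> \<xi> (0, True) \<partial>borel_of_pmf (map_pmf fst C))
        = (\<integral>\<^sup>+z. xi_dist q \<kappa> (fst z) (0, True) \<partial>C)"
      by (simp add: nn_integral_borel_of_pmf)
    also have "\<dots> = ennreal ((\<Sum>i<N. bernoulli_pair_mean (t i) m
        (\<lambda>k. xi_dist q \<kappa> (fst (flip_and_shift X Y v i k)) (0, True))) / N)"
      unfolding C_def
      using nn_integral_perturbation_pmf[where t=t and m=m and G="flip_and_shift X Y v"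
          and h="\<lambda>z. xi_dist q \<kappa> (fst z) (0, True)", OF \<open>0 < N\<close> t m xi_dist_nonneg[OF \<open>0 \<le> \<kappa>\<close>]]
      by simp
    finally show ?thesis by simp
  qed
  ultimately show ?thesis by (simp add: wball_def prob_Xi_def prob_space_borel_of_pmf C_def)
qed

lemma flip_and_shift_value_le_dr_aro_inner:
  fixes X :: "nat \<Rightarrow> real^'n::finite" and v :: "real^'n" and t :: "nat \<Rightarrow> real" and m \<epsilon> :: real
  assumes p: "1 \<le> p" and q: "1 \<le> q" and "0 \<le> \<alpha>" and "0 \<le> \<kappa>" and "0 < N"
    and t: "\<And>i. 0 \<le> t i" "\<And>i. t i \<le> 1" and m: "0 \<le> m" "m \<le> 1"
    and budget: "\<kappa> * (\<Sum>i<N. t i) + N * (m * pnorm q v) \<le> \<epsilon> * N"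
  shows "ennreal ((\<Sum>i<N. (1 - m) * ((1 - t i) * advloss p \<alpha> \<beta> (X i) (Y i) + t i * advloss p \<alpha> \<beta> (X i) (\<not> Y i))
      + m * (\<beta> \<bullet> v - \<bar>\<beta> \<bullet> X i\<bar>)) / N) \<le> dr_aro_inner \<epsilon> \<kappa> \<alpha> p q N X Y \<beta>"
proof -
  define C where "C = perturbation_pmf N (flip_and_shift X Y v) t m"
  define L where "L \<xi> = advloss p \<alpha> \<beta> (fst \<xi>) (snd \<xi>)" for \<xi> :: "(real^'n) \<times> bool"
  have "(\<lambda>\<xi>. ennreal (L \<xi>)) \<in> borel_measurable borel"
    unfolding L_def using measurable_compose[OF advloss_measurable[of p \<alpha> \<beta> "\<lambda>y. y"] measurable_ennreal]
    by (simp add: o_def)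
  then have "(\<integral>\<^sup>+\<xi>. worst_loss p \<alpha> \<beta> \<xi> \<partial>borel_of_pmf (map_pmf fst C)) = (\<integral>\<^sup>+z. L (fst z) \<partial>C)"
    by (simp add: worst_loss_eq_advloss[OF p \<open>0 \<le> \<alpha>\<close>] nn_integral_borel_of_pmf L_def)
  also have "\<dots> = ennreal ((\<Sum>i<N. bernoulli_pair_mean (t i) m (\<lambda>k. L (fst (flip_and_shift X Y v i k)))) / N)"
    unfolding C_def
    by (intro nn_integral_perturbation_pmf[where h="\<lambda>z. L (fst z)", OF \<open>0 < N\<close> t m])
      (simp add: L_def less_imp_le[OF advloss_pos])
  also have "ennreal ((\<Sum>i<N. (1 - m) * ((1 - t i) * advloss p \<alpha> \<beta> (X i) (Y i) + t i * advloss p \<alpha> \<beta> (X i) (\<not> Y i))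
      + m * (\<beta> \<bullet> v - \<bar>\<beta> \<bullet> X i\<bar>)) / N) \<le> \<dots>"
  proof (intro ennreal_leI divide_right_mono sum_mono)
    fix i
    let ?\<psi> = "\<lambda>k. if snd k then \<beta> \<bullet> v - \<bar>\<beta> \<bullet> X i\<bar> else advloss p \<alpha> \<beta> (X i) (if fst k then \<not> Y i else Y i)"
    have "bernoulli_pair_mean (t i) m ?\<psi> \<le> bernoulli_pair_mean (t i) m (\<lambda>k. L (fst (flip_and_shift X Y v i k)))"
      unfolding L_def using t m by (intro bernoulli_pair_mean_mono advloss_flip_and_shift_ge \<open>0 \<le> \<alpha>\<close>)
    then show "(1 - m) * ((1 - t i) * advloss p \<alpha> \<beta> (X i) (Y i) + t i * advloss p \<alpha> \<beta> (X i) (\<not> Y i))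
        + m * (\<beta> \<bullet> v - \<bar>\<beta> \<bullet> X i\<bar>) \<le> bernoulli_pair_mean (t i) m (\<lambda>k. L (fst (flip_and_shift X Y v i k)))"
      by (simp add: bernoulli_pair_mean_def algebra_simps)
  qed simp
  also have "(\<integral>\<^sup>+\<xi>. worst_loss p \<alpha> \<beta> \<xi> \<partial>borel_of_pmf (map_pmf fst C)) \<le> dr_aro_inner \<epsilon> \<kappa> \<alpha> p q N X Y \<beta>"
    unfolding dr_aro_inner_def C_def
    by (intro SUP_upper flip_and_shift_in_wball q \<open>0 \<le> \<kappa>\<close> \<open>0 < N\<close> t m budget)
  finally show ?thesis .
qed

lemma small_weight_exists:
  fixes c \<delta> :: real
  assumes "0 \<le> c" and "0 < \<delta>"
  obtains m where "0 < m" "m \<le> 1" "m * c \<le> \<delta>"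
proof
  let ?m = "min 1 (\<delta> / (c + 1))"
  show "0 < ?m" "?m \<le> 1" using assms by auto
  have "?m * c \<le> \<delta> / (c + 1) * (c + 1)"
    using assms by (intro mult_mono) auto
  then show "?m * c \<le> \<delta>" using assms by simp
qed

text \<open>
  Flipping labels with probabilities \<open>t\<^sub>i\<close> spends the budget \<open>\<kappa> \<Sum> t\<^sub>i / N\<close>; the rest \<open>\<rho>\<close> is spent by
  moving a vanishing mass \<open>m\<close> a distance \<open>\<rho> / m\<close> along the direction dual to \<open>\<beta>\<close>, which gains \<open>\<rho> \<parallel>\<beta>\<parallel>\<^sub>q\<^sub>*\<close>.\<close>

lemma flip_value_le_dr_aro_inner:
  fixes X :: "nat \<Rightarrow> real^'n::finite" and t :: "nat \<Rightarrow> real" and \<epsilon> :: real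
  assumes p: "1 \<le> p" and q: "1 \<le> q" and "0 \<le> \<alpha>" and "0 \<le> \<kappa>" and "0 < N"
    and t: "\<And>i. 0 \<le> t i" "\<And>i. t i \<le> 1" and budget: "\<kappa> * (\<Sum>i<N. t i) \<le> \<epsilon> * N"
  shows "ennreal ((\<Sum>i<N. (1 - t i) * advloss p \<alpha> \<beta> (X i) (Y i) + t i * advloss p \<alpha> \<beta> (X i) (\<not> Y i)) / N
      + (\<epsilon> - \<kappa> * (\<Sum>i<N. t i) / N) * pnorm (dual_exp q) \<beta>) \<le> dr_aro_inner \<epsilon> \<kappa> \<alpha> p q N X Y \<beta>"
proof (rule ennreal_le_epsilon)
  fix \<delta> :: real assume "0 < \<delta>"
  define w where "w i = (1 - t i) * advloss p \<alpha> \<beta> (X i) (Y i) + t i * advloss p \<alpha> \<beta> (X i) (\<not> Y i)" for i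
  define V where "V = (\<Sum>i<N. w i) / N"
  define K where "K = (\<Sum>i<N. \<bar>\<beta> \<bullet> X i\<bar>) / N"
  define \<rho> where "\<rho> = \<epsilon> - \<kappa> * (\<Sum>i<N. t i) / N"
  define b where "b = pnorm (dual_exp q) \<beta>"
  obtain u where u: "pnorm q u \<le> 1" "\<beta> \<bullet> u = b" using pnorm_dual_attained[OF q] unfolding b_def by blast
  have "0 \<le> V" unfolding V_def w_def using t
    by (intro divide_nonneg_nonneg sum_nonneg add_nonneg_nonneg mult_nonneg_nonneg)
      (auto simp: less_imp_le[OF advloss_pos])
  have "0 \<le> K" unfolding K_def by (simp add: sum_nonneg)
  obtain m where m: "0 < m" "m \<le> 1" and "m * (V + K) \<le> \<delta>"
    using small_weight_exists[of "V + K" \<delta>] \<open>0 \<le> V\<close> \<open>0 \<le> K\<close> \<open>0 < \<delta>\<close> by auto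
  have "0 \<le> \<rho>" using budget \<open>0 < N\<close> by (simp add: \<rho>_def divide_le_eq)
  define v where "v = (\<rho> / m) *\<^sub>R u"
  have "m * pnorm q v \<le> m * (\<bar>\<rho> / m\<bar> * pnorm q u)"
    unfolding v_def using m by (intro mult_left_mono pnorm_scaleR_le[OF q]) auto
  also have "\<dots> \<le> \<rho>" using u m \<open>0 \<le> \<rho>\<close> by (simp add: mult_left_le)
  finally have "\<kappa> * (\<Sum>i<N. t i) + N * (m * pnorm q v) \<le> \<epsilon> * N"
    using \<open>0 < N\<close> by (simp add: \<rho>_def field_simps)
  from flip_and_shift_value_le_dr_aro_inner[OF p q \<open>0 \<le> \<alpha>\<close> \<open>0 \<le> \<kappa>\<close> \<open>0 < N\<close> t less_imp_le[OF m(1)] m(2) this]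
  have lower: "ennreal ((\<Sum>i<N. (1 - m) * w i + m * (\<beta> \<bullet> v - \<bar>\<beta> \<bullet> X i\<bar>)) / N) \<le> dr_aro_inner \<epsilon> \<kappa> \<alpha> p q N X Y \<beta>"
    by (simp add: w_def)
  have "m * (\<beta> \<bullet> v) = \<rho> * b" using m u by (simp add: v_def)
  then have "(\<Sum>i<N. (1 - m) * w i + m * (\<beta> \<bullet> v - \<bar>\<beta> \<bullet> X i\<bar>))
      = (1 - m) * (\<Sum>i<N. w i) + N * (\<rho> * b) - m * (\<Sum>i<N. \<bar>\<beta> \<bullet> X i\<bar>)"
    by (simp add: sum.distrib sum_subtractf sum_distrib_left right_diff_distrib)
  then have "(\<Sum>i<N. (1 - m) * w i + m * (\<beta> \<bullet> v - \<bar>\<beta> \<bullet> X i\<bar>)) / N = (1 - m) * V + \<rho> * b - m * K"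
    using \<open>0 < N\<close> by (simp add: V_def K_def diff_divide_distrib add_divide_distrib)
  then have "V + \<rho> * b \<le> (\<Sum>i<N. (1 - m) * w i + m * (\<beta> \<bullet> v - \<bar>\<beta> \<bullet> X i\<bar>)) / N + \<delta>"
    using \<open>m * (V + K) \<le> \<delta>\<close> by (simp add: algebra_simps)
  then have "ennreal (V + \<rho> * b) \<le> ennreal ((\<Sum>i<N. (1 - m) * w i + m * (\<beta> \<bullet> v - \<bar>\<beta> \<bullet> X i\<bar>)) / N) + ennreal \<delta>"
    using \<open>0 < \<delta>\<close> by (intro ennreal_le_add_ennreal) auto
  also have "\<dots> \<le> dr_aro_inner \<epsilon> \<kappa> \<alpha> p q N X Y \<beta> + ennreal \<delta>"
    using lower by (rule add_right_mono)
  finally show "ennreal ((\<Sum>i<N. (1 - t i) * advloss p \<alpha> \<beta> (X i) (Y i) + t i * advloss p \<alpha> \<beta> (X i) (\<not> Y i)) / N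
      + (\<epsilon> - \<kappa> * (\<Sum>i<N. t i) / N) * pnorm (dual_exp q) \<beta>) \<le> dr_aro_inner \<epsilon> \<kappa> \<alpha> p q N X Y \<beta> + ennreal \<delta>"
    by (simp add: V_def w_def \<rho>_def b_def)
qed

lemma dr_aro_inner_eq_INF_prog_obj:
  fixes \<epsilon> \<kappa> \<alpha> :: real and X :: "nat \<Rightarrow> real ^ 'n::finite"
  assumes "0 < \<epsilon>" and "0 \<le> \<kappa>" and "0 \<le> \<alpha>" and "1 \<le> p" and "1 \<le> q" and "0 < N"
  shows "dr_aro_inner \<epsilon> \<kappa> \<alpha> p q N X Y \<beta> =
    (INF (lam, s) \<in> {(lam, s). prog_feasible \<kappa> \<alpha> p q N X Y \<beta> lam s}. ennreal (prog_obj \<epsilon> N lam s))"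
proof (rule antisym)
  show "dr_aro_inner \<epsilon> \<kappa> \<alpha> p q N X Y \<beta>
      \<le> (INF (lam, s) \<in> {(lam, s). prog_feasible \<kappa> \<alpha> p q N X Y \<beta> lam s}. ennreal (prog_obj \<epsilon> N lam s))"
    using assms by (auto intro!: INF_greatest dr_aro_inner_le_prog_obj)
next
  define L where "L i = advloss p \<alpha> \<beta> (X i) (Y i)" for i
  define L' where "L' i = advloss p \<alpha> \<beta> (X i) (\<not> Y i)" for i
  obtain lam t where lam: "pnorm (dual_exp q) \<beta> \<le> lam" and t: "\<And>i. 0 \<le> t i \<and> t i \<le> 1"
    and slack: "\<And>i. i < N \<Longrightarrow> lam * \<kappa> < L' i - L i \<Longrightarrow> t i = 1"
      "\<And>i. i < N \<Longrightarrow> L' i - L i < lam * \<kappa> \<Longrightarrow> t i = 0"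
    and budget: "\<kappa> * (\<Sum>i<N. t i) \<le> \<epsilon> * N"
    and tight: "lam = pnorm (dual_exp q) \<beta> \<or> \<kappa> * (\<Sum>i<N. t i) = \<epsilon> * N"
    using threshold_flip_weights_exist[where b="pnorm (dual_exp q) \<beta>" and D="\<lambda>i. L' i - L i",
          OF \<open>0 \<le> \<kappa>\<close> \<open>0 < \<epsilon>\<close>] by blast
  define s where "s i = max (L i) (L' i - lam * \<kappa>)" for i
  have "prog_feasible \<kappa> \<alpha> p q N X Y \<beta> lam s"
    using lam pnorm_nonneg[of "dual_exp q" \<beta>] less_imp_le[OF advloss_pos]
    by (auto simp: prog_feasible_def s_def L_def L'_def le_max_iff_disj)
  then have "(INF (lam, s) \<in> {(lam, s). prog_feasible \<kappa> \<alpha> p q N X Y \<beta> lam s}. ennreal (prog_obj \<epsilon> N lam s))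
      \<le> ennreal (prog_obj \<epsilon> N lam s)"
    by (intro INF_lower2[of "(lam, s)"]) auto
  also have "prog_obj \<epsilon> N lam s = (\<Sum>i<N. (1 - t i) * L i + t i * L' i) / N
      + (\<epsilon> - \<kappa> * (\<Sum>i<N. t i) / N) * pnorm (dual_exp q) \<beta>"
    unfolding prog_obj_def s_def using primal_dual_value_eq[OF \<open>0 < N\<close> slack tight] by simp
  also have "ennreal \<dots> \<le> dr_aro_inner \<epsilon> \<kappa> \<alpha> p q N X Y \<beta>"
    unfolding L_def L'_def using assms t budget by (intro flip_value_le_dr_aro_inner) auto
  finally show "(INF (lam, s) \<in> {(lam, s). prog_feasible \<kappa> \<alpha> p q N X Y \<beta> lam s}. ennreal (prog_obj \<epsilon> N lam s))
      \<le> dr_aro_inner \<epsilon> \<kappa> \<alpha> p q N X Y \<beta>" .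
qed

theorem corollary1:
  fixes \<epsilon> \<kappa> \<alpha> :: real and p q :: ereal and N :: nat
    and X :: "nat \<Rightarrow> real ^ 'n::finite" and Y :: "nat \<Rightarrow> bool"
  assumes "\<epsilon> > 0" and "\<kappa> \<ge> 0" and "\<alpha> \<ge> 0"
    and "1 \<le> p" and "1 \<le> q" and "N > 0"
  shows "(INF \<beta>. dr_aro_inner \<epsilon> \<kappa> \<alpha> p q N X Y \<beta>) =
           (INF (\<beta>, lam, s) \<in> {(\<beta>, lam, s). prog_feasible \<kappa> \<alpha> p q N X Y \<beta> lam s}.
              ennreal (prog_obj \<epsilon> N lam s))
    \<and> (\<forall>\<beta>. dr_aro_inner \<epsilon> \<kappa> \<alpha> p q N X Y \<beta> =
           (INF (lam, s) \<in> {(lam, s). prog_feasible \<kappa> \<alpha> p q N X Y \<beta> lam s}.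
              ennreal (prog_obj \<epsilon> N lam s)))"
proof -
  note inner = dr_aro_inner_eq_INF_prog_obj[OF assms]
  then have "(INF \<beta>. dr_aro_inner \<epsilon> \<kappa> \<alpha> p q N X Y \<beta>) =
      (INF \<beta>. INF (lam, s) \<in> {(lam, s). prog_feasible \<kappa> \<alpha> p q N X Y \<beta> lam s}. ennreal (prog_obj \<epsilon> N lam s))"
    by (intro INF_cong) simp_all
  also have "(INF \<beta>. INF (lam, s) \<in> {(lam, s). prog_feasible \<kappa> \<alpha> p q N X Y \<beta> lam s}. ennreal (prog_obj \<epsilon> N lam s)) =
      (INF (\<beta>, lam, s) \<in> {(\<beta>, lam, s). prog_feasible \<kappa> \<alpha> p q N X Y \<beta> lam s}. ennreal (prog_obj \<epsilon> N lam s))"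
    by (rule antisym) (auto intro!: INF_greatest INF_lower2)
  finally show ?thesis using inner by blast
qed

end
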